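(* Consider the distributed Lion algorithm Dis-Lion (v1) (defined in the context) under Assumptions (D1) and (D3), with $\beta_1,\beta_2\in(0,1]$, $\beta_2^2\le\beta_1\le\sqrt{\beta_2}$, $\eta>0$, $0\le\lambda\le\frac1{2\eta T}$ and $\|\mathbf{x}_1\|_\infty\le\eta$. Then $$\mathbb{E}\left[\frac1T\sum_{t=1}^T\Big\|\frac1n\sum_{j=1}^n\mathbf{v}_t^j-\nabla f(\mathbf{x}_t)\Big\|^2\right]\le\frac{2\sigma^2}{\beta_2nT}+\frac{16\eta^2L^2d}{\beta_2^2}+\frac{2\beta_2\sigma^2}{n}.$$
   Context: Distributed setting: $n$ nodes; $f(\mathbf{x})=\frac1n\sum_{j=1}^nf_j(\mathbf{x})$ with $f_j(\mathbf{x})=\mathbb{E}_{\xi^j\sim\mathcal{D}_j}[f_j(\mathbf{x};\xi^j)]$, where the distributions $\mathcal{D}_j$ may differ. Node $j$ draws samples $\xi^j\sim\mathcal{D}_j$, independent across nodes and time and of everything before, and can evaluate $\nabla f_j(\mathbf{x};\xi^j)$. $\|\cdot\|$ is the Euclidean norm; $\operatorname{sign}$ acts coordinatewise with values in $\{-1,0,1\}$. (D1) each $f_j$ is $L$-smooth: $\|\nabla f_j(\mathbf{x})-\nabla f_j(\mathbf{y})\|\le L\|\mathbf{x}-\mathbf{y}\|$. (D3) $\mathbb{E}_{\xi}[\nabla f_j(\mathbf{x};\xi)]=\nabla f_j(\mathbf{x})$ and $\mathbb{E}_\xi\|\nabla f_j(\mathbf{x};\xi)-\nabla f_j(\mathbf{x})\|^2\le\sigma^2$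 for all $j,\mathbf{x}$. Dis-Lion (v1): given $\mathbf{x}_1$, $\beta_1,\beta_2,\eta,\lambda$. At $t=1$ each node sets $\mathbf{v}_1^j=\mathbf{m}_1^j=\nabla f_j(\mathbf{x}_1;\xi_1^j)$. For $t\ge2$ each node draws a fresh $\xi_t^j$ and sets $\mathbf{v}_t^j=(1-\beta_1)\mathbf{m}_{t-1}^j+\beta_1\nabla f_j(\mathbf{x}_t;\xi_t^j)$, $\mathbf{m}_t^j=(1-\beta_2)\mathbf{m}_{t-1}^j+\beta_2\nabla f_j(\mathbf{x}_t;\xi_t^j)$. The server forms $\mathbf{v}_t=\sum_{j=1}^n\mathbf{v}_t^j$, and all nodes update $\mathbf{x}_{t+1}=\mathbf{x}_t-\eta(\operatorname{sign}(\mathbf{v}_t)+\lambda\mathbf{x}_t)$. *)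

theory Defs
  imports "HOL-Probability.Probability"
begin

definition vsign :: "real^'d \<Rightarrow> real^'d" where
  "vsign v = (\<chi> i. sgn (v $ i))"

text \<open>G j x s  : stochastic gradient of node j at point x with sample s.
  xi t j   : sample drawn by node j at time t (t \<ge> 1, j \<in> {1..n}).
  dlion_state ... t = (x_{t+1}, m_t, v_t) for t \<ge> 1 ; dlion_state ... 0 = (x_1, 0, 0).\<close>
fun dlion_state ::
  "(nat \<Rightarrow> real^'d \<Rightarrow> 's \<Rightarrow> real^'d) \<Rightarrow> (nat \<Rightarrow> nat \<Rightarrow> 's) \<Rightarrow> nat \<Rightarrow>
   real \<Rightarrow> real \<Rightarrow> real \<Rightarrow> real \<Rightarrow> real^'d \<Rightarrow> nat \<Rightarrow>
   (real^'d) \<times> (nat \<Rightarrow> real^'d) \<times> (nat \<Rightarrow> real^'d)" where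
  "dlion_state G xi n b1 b2 eta lam x1 0 = (x1, (\<lambda>j. 0), (\<lambda>j. 0))"
| "dlion_state G xi n b1 b2 eta lam x1 (Suc t) =
     (let (x, m, _) = dlion_state G xi n b1 b2 eta lam x1 t;
          g = (\<lambda>j. G j x (xi (Suc t) j));
          v = (if t = 0 then g else (\<lambda>j. (1 - b1) *\<^sub>R m j + b1 *\<^sub>R g j));
          m' = (if t = 0 then g else (\<lambda>j. (1 - b2) *\<^sub>R m j + b2 *\<^sub>R g j));
          vs = (\<Sum>j\<in>{1..n}. v j)
      in (x - eta *\<^sub>R (vsign vs + lam *\<^sub>R x), m', v))"

definition dlion_x where
  "dlion_x G xi n b1 b2 eta lam x1 t = fst (dlion_state G xi n b1 b2 eta lam x1 (t - 1))"

definition dlion_v where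
  "dlion_v G xi n b1 b2 eta lam x1 t j = snd (snd (dlion_state G xi n b1 b2 eta lam x1 t)) j"

end

theory Submission
  imports Defs
begin

(*
  The averaged error of v_t is a fixed linear combination of the averaged gradient noises
  e_1, ..., e_t (exponential moving averages with weights beta_1 and beta_2) plus a bias.  The bias
  only sees the drift of the averaged gradient along the trajectory: weight decay keeps
  infnorm x_t <= t eta, so for t <= T a step moves x by at most (3/2) eta sqrt d and the gradient
  by at most (3/2) L eta sqrt d, and the moving average damps the accumulated drift to 1/beta_2
  times that.  The noises are martingale differences with conditional variance at most
  sigma^2/n; on the product space of the samples, to which independence transfers the
  expectation, a combination sum_s c_s e_s therefore has second moment at most
  (sum_s c_s^2) sigma^2/n.  The squared moving-average weights sum to a geometric series, and
  beta_2^2 <= beta_1 <= sqrt beta_2 turns the resulting constants into 2 and 16.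
*)

section \<open>Second moments of centred sums on product spaces\<close>

lemma nn_integral_norm_add_scaleR_centered_le:
  fixes e :: "'s \<Rightarrow> 'a::euclidean_space"
  assumes P: "prob_space P" and e: "integrable P e" and mean: "(\<integral>y. e y \<partial>P) = 0"
  shows "(\<integral>\<^sup>+y. ennreal ((norm (a + c *\<^sub>R e y))\<^sup>2) \<partial>P)
         \<le> ennreal ((norm a)\<^sup>2) + ennreal (c\<^sup>2) * (\<integral>\<^sup>+y. ennreal ((norm (e y))\<^sup>2) \<partial>P)"
proof (cases "(\<integral>\<^sup>+y. ennreal ((norm (e y))\<^sup>2) \<partial>P) = \<infinity> \<and> c \<noteq> 0")
  case True
  then show ?thesis by (simp add: ennreal_mult_top)
next
  case False
  interpret prob_space P by fact
  have [measurable]: "e \<in> borel_measurable P" using e by auto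
  have e2: "integrable P (\<lambda>y. c\<^sup>2 * (norm (e y))\<^sup>2)"
  proof (cases "c = 0")
    case False
    with \<open>\<not> (_ \<and> c \<noteq> 0)\<close> have "(\<integral>\<^sup>+y. ennreal ((norm (e y))\<^sup>2) \<partial>P) < \<infinity>"
      by (simp add: top.not_eq_extremum)
    then show ?thesis by (intro integrable_mult_right integrableI_bounded) auto
  qed simp
  have expand: "(norm (a + c *\<^sub>R e y))\<^sup>2 = (norm a)\<^sup>2 + 2 * c * (a \<bullet> e y) + c\<^sup>2 * (norm (e y))\<^sup>2" for y
    unfolding power2_norm_eq_inner
    by (simp add: inner_add_left inner_add_right inner_commute algebra_simps power2_eq_square)
  have "(\<integral>\<^sup>+y. ennreal ((norm (a + c *\<^sub>R e y))\<^sup>2) \<partial>P)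
      = ennreal (\<integral>y. (norm a)\<^sup>2 + 2 * c * (a \<bullet> e y) + c\<^sup>2 * (norm (e y))\<^sup>2 \<partial>P)"
    unfolding expand using e e2 by (intro nn_integral_eq_integral) (auto, simp flip: expand)
  also have "\<dots> = ennreal ((norm a)\<^sup>2 + (\<integral>y. c\<^sup>2 * (norm (e y))\<^sup>2 \<partial>P))"
    using e e2 mean by (simp add: prob_space)
  also have "\<dots> = ennreal ((norm a)\<^sup>2) + (\<integral>\<^sup>+y. ennreal (c\<^sup>2 * (norm (e y))\<^sup>2) \<partial>P)"
    using e2 by (simp add: nn_integral_eq_integral integral_nonneg)
  also have "\<dots> = ennreal ((norm a)\<^sup>2) + ennreal (c\<^sup>2) * (\<integral>\<^sup>+y. ennreal ((norm (e y))\<^sup>2) \<partial>P)"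
    by (simp add: ennreal_mult nn_integral_cmult)
  finally show ?thesis by simp
qed

lemma nn_integral_PiM_insert_norm_add_centered_le:
  fixes S f :: "('i \<Rightarrow> 's) \<Rightarrow> 'a::euclidean_space"
  assumes prob: "\<And>i. prob_space (Mi i)" and J: "finite J" "i \<notin> J"
    and S: "S \<in> borel_measurable (PiM J Mi)" "\<And>x y. S (x(i := y)) = S x"
    and sum_meas: "(\<lambda>w. S w + c *\<^sub>R f w) \<in> borel_measurable (PiM (insert i J) Mi)"
    and int: "\<And>x. x \<in> space (PiM J Mi) \<Longrightarrow> integrable (Mi i) (\<lambda>y. f (x(i := y)))"
    and mean: "\<And>x. x \<in> space (PiM J Mi) \<Longrightarrow> (\<integral>y. f (x(i := y)) \<partial>Mi i) = 0"
    and var: "\<And>x. x \<in> space (PiM J Mi) \<Longrightarrow>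
                (\<integral>\<^sup>+y. ennreal ((norm (f (x(i := y))))\<^sup>2) \<partial>Mi i) \<le> ennreal s"
  shows "(\<integral>\<^sup>+w. ennreal ((norm (S w + c *\<^sub>R f w))\<^sup>2) \<partial>PiM (insert i J) Mi)
           \<le> (\<integral>\<^sup>+w. ennreal ((norm (S w))\<^sup>2) \<partial>PiM J Mi) + ennreal (c\<^sup>2) * ennreal s"
proof -
  interpret product_sigma_finite Mi
    using prob by (simp add: product_sigma_finite_def prob_space_imp_sigma_finite)
  interpret PJ: prob_space "PiM J Mi" using prob by (intro prob_space_PiM) auto
  have "(\<integral>\<^sup>+w. ennreal ((norm (S w + c *\<^sub>R f w))\<^sup>2) \<partial>PiM (insert i J) Mi)
      = (\<integral>\<^sup>+x. (\<integral>\<^sup>+y. ennreal ((norm (S x + c *\<^sub>R f (x(i := y))))\<^sup>2) \<partial>Mi i) \<partial>PiM J Mi)"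
    using J sum_meas by (subst product_nn_integral_insert) (auto simp: S(2))
  also have "\<dots> \<le> (\<integral>\<^sup>+x. ennreal ((norm (S x))\<^sup>2) + ennreal (c\<^sup>2) * ennreal s \<partial>PiM J Mi)"
  proof (intro nn_integral_mono order.trans[OF nn_integral_norm_add_scaleR_centered_le])
    fix x assume "x \<in> space (PiM J Mi)"
    then show "prob_space (Mi i)" "integrable (Mi i) (\<lambda>y. f (x(i := y)))" "(\<integral>y. f (x(i := y)) \<partial>Mi i) = 0"
      "ennreal ((norm (S x))\<^sup>2) + ennreal (c\<^sup>2) * (\<integral>\<^sup>+y. ennreal ((norm (f (x(i := y))))\<^sup>2) \<partial>Mi i)
        \<le> ennreal ((norm (S x))\<^sup>2) + ennreal (c\<^sup>2) * ennreal s"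
      using prob int mean var by (auto intro: add_left_mono mult_left_mono)
  qed
  also have "\<dots> = (\<integral>\<^sup>+x. ennreal ((norm (S x))\<^sup>2) \<partial>PiM J Mi) + ennreal (c\<^sup>2) * ennreal s"
    using S(1) by (subst nn_integral_add) (auto simp: PJ.emeasure_space_1)
  finally show ?thesis .
qed

text \<open>Integrating out the coordinates one at a time, in the order \<open>enum 0, enum 1, \<dots>\<close>, kills every
  cross term because each \<open>e k\<close> is centred given the earlier coordinates.\<close>
lemma nn_integral_PiM_norm_sum_centered_le:
  fixes Mi :: "'i \<Rightarrow> 's measure" and enum :: "nat \<Rightarrow> 'i"
    and e :: "nat \<Rightarrow> ('i \<Rightarrow> 's) \<Rightarrow> 'a::euclidean_space"
  assumes prob: "\<And>i. prob_space (Mi i)" and inj: "inj enum"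
    and meas: "\<And>k m. k < m \<Longrightarrow> m \<le> K \<Longrightarrow> e k \<in> borel_measurable (PiM (enum ` {..<m}) Mi)"
    and dep: "\<And>k w w'. (\<And>l. l \<le> k \<Longrightarrow> w (enum l) = w' (enum l)) \<Longrightarrow> e k w = e k w'"
    and int: "\<And>k w. k < K \<Longrightarrow> w \<in> space (PiM (enum ` {..<k}) Mi) \<Longrightarrow>
                integrable (Mi (enum k)) (\<lambda>y. e k (w(enum k := y)))"
    and mean: "\<And>k w. k < K \<Longrightarrow> w \<in> space (PiM (enum ` {..<k}) Mi) \<Longrightarrow>
                 (\<integral>y. e k (w(enum k := y)) \<partial>Mi (enum k)) = 0"
    and var: "\<And>k w. k < K \<Longrightarrow> w \<in> space (PiM (enum ` {..<k}) Mi) \<Longrightarrow>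
                (\<integral>\<^sup>+y. ennreal ((norm (e k (w(enum k := y))))\<^sup>2) \<partial>Mi (enum k)) \<le> ennreal s"
    and s: "0 \<le> s"
  shows "(\<integral>\<^sup>+w. ennreal ((norm (\<Sum>l<K. a l *\<^sub>R e l w))\<^sup>2) \<partial>PiM (enum ` {..<K}) Mi)
           \<le> ennreal ((\<Sum>l<K. (a l)\<^sup>2) * s)"
proof -
  have "(\<integral>\<^sup>+w. ennreal ((norm (\<Sum>l<k. a l *\<^sub>R e l w))\<^sup>2) \<partial>PiM (enum ` {..<k}) Mi)
      \<le> ennreal ((\<Sum>l<k. (a l)\<^sup>2) * s)" if "k \<le> K" for k
    using that
  proof (induction k)
    case (Suc k)
    have prefix: "enum ` {..<Suc k} = insert (enum k) (enum ` {..<k})" by (simp add: lessThan_Suc)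
    have "(\<integral>\<^sup>+w. ennreal ((norm (\<Sum>l<Suc k. a l *\<^sub>R e l w))\<^sup>2) \<partial>PiM (enum ` {..<Suc k}) Mi)
        \<le> (\<integral>\<^sup>+w. ennreal ((norm (\<Sum>l<k. a l *\<^sub>R e l w))\<^sup>2) \<partial>PiM (enum ` {..<k}) Mi)
          + ennreal ((a k)\<^sup>2) * ennreal s"
      unfolding sum.lessThan_Suc prefix
    proof (rule nn_integral_PiM_insert_norm_add_centered_le[OF prob])
      show "(\<Sum>l<k. a l *\<^sub>R e l (x(enum k := y))) = (\<Sum>l<k. a l *\<^sub>R e l x)" for x y
        using inj by (intro sum.cong refl arg_cong2[where f = scaleR] dep) (auto dest: injD)
      show "(\<lambda>w. (\<Sum>l<k. a l *\<^sub>R e l w) + a k *\<^sub>R e k w)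
          \<in> borel_measurable (PiM (insert (enum k) (enum ` {..<k})) Mi)"
        using meas Suc.prems unfolding prefix[symmetric] by measurable
    qed (use inj meas int mean var Suc.prems in \<open>auto dest: injD\<close>)
    also have "\<dots> \<le> ennreal ((\<Sum>l<k. (a l)\<^sup>2) * s) + ennreal ((a k)\<^sup>2) * ennreal s"
      using Suc by (intro add_right_mono) auto
    also have "\<dots> = ennreal ((\<Sum>l<Suc k. (a l)\<^sup>2) * s)"
      using s by (simp add: ennreal_plus[symmetric] ennreal_mult[symmetric] sum_nonneg algebra_simps
          del: ennreal_plus)
    finally show ?case .
  qed simp
  then show ?thesis by simp
qed

lemma measurable_PiM_subset_if_depends:
  fixes f :: "('i \<Rightarrow> 's) \<Rightarrow> 'b::topological_space"
  assumes f: "f \<in> borel_measurable (PiM I Mi)" and "J \<subseteq> I"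
    and ne: "\<And>i. i \<in> I \<Longrightarrow> space (Mi i) \<noteq> {}"
    and dep: "\<And>w w'. (\<And>i. i \<in> J \<Longrightarrow> w i = w' i) \<Longrightarrow> f w = f w'"
  shows "f \<in> borel_measurable (PiM J Mi)"
proof -
  define c where "c i = (SOME y. y \<in> space (Mi i))" for i
  have c: "c i \<in> space (Mi i)" if "i \<in> I" for i
    unfolding c_def using ne[OF that] by (simp add: some_in_eq)
  define extend where "extend w = (\<lambda>i\<in>I. if i \<in> J then w i else c i)" for w :: "'i \<Rightarrow> 's"
  have "extend \<in> measurable (PiM J Mi) (PiM I Mi)"
    unfolding extend_def
  proof (rule measurable_restrict)
    show "(\<lambda>w. if i \<in> J then w i else c i) \<in> measurable (PiM J Mi) (Mi i)" if "i \<in> I" for i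
      using c[OF that] by (cases "i \<in> J") auto
  qed
  from measurable_compose[OF this f] have "(\<lambda>w. f (extend w)) \<in> borel_measurable (PiM J Mi)" .
  moreover have "f (extend w) = f w" for w
    by (rule dep) (use \<open>J \<subseteq> I\<close> in \<open>auto simp: extend_def\<close>)
  ultimately show ?thesis by simp
qed

lemma (in prob_space) nn_integral_indep_vars_PiM:
  assumes indep: "indep_vars N Y I" and "I \<noteq> {}"
    and rv: "\<And>i. i \<in> I \<Longrightarrow> random_variable (N i) (Y i)"
    and distr: "\<And>i. i \<in> I \<Longrightarrow> distr M (N i) (Y i) = N i"
    and f: "f \<in> borel_measurable (PiM I N)"
  shows "(\<integral>\<^sup>+\<omega>. f (\<lambda>i\<in>I. Y i \<omega>) \<partial>M) = (\<integral>\<^sup>+w. f w \<partial>PiM I N)"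
proof -
  have "distr M (PiM I N) (\<lambda>\<omega>. \<lambda>i\<in>I. Y i \<omega>) = PiM I (\<lambda>i. distr M (N i) (Y i))"
    using indep indep_vars_iff_distr_eq_PiM'[OF \<open>I \<noteq> {}\<close> rv] by simp
  also have "\<dots> = PiM I N" by (intro PiM_cong) (simp_all add: distr)
  finally have product: "distr M (PiM I N) (\<lambda>\<omega>. \<lambda>i\<in>I. Y i \<omega>) = PiM I N" .
  have "(\<lambda>\<omega>. \<lambda>i\<in>I. Y i \<omega>) \<in> measurable M (PiM I N)"
    using rv by (rule measurable_restrict)
  then show ?thesis
    using f by (subst product[symmetric], subst nn_integral_distr) auto
qed

lemma nn_integral_cmult_sum_le:
  fixes g :: "'i \<Rightarrow> 'a \<Rightarrow> real"
  assumes "finite S" "0 \<le> a"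
    and meas: "\<And>t. t \<in> S \<Longrightarrow> g t \<in> borel_measurable N"
    and nonneg: "\<And>t x. t \<in> S \<Longrightarrow> 0 \<le> g t x"
    and bound: "\<And>t. t \<in> S \<Longrightarrow> (\<integral>\<^sup>+x. ennreal (g t x) \<partial>N) \<le> ennreal (B t)"
    and B: "\<And>t. t \<in> S \<Longrightarrow> 0 \<le> B t"
  shows "(\<integral>\<^sup>+x. ennreal (a * (\<Sum>t\<in>S. g t x)) \<partial>N) \<le> ennreal (a * (\<Sum>t\<in>S. B t))"
proof -
  have "(\<integral>\<^sup>+x. ennreal (a * (\<Sum>t\<in>S. g t x)) \<partial>N) = (\<integral>\<^sup>+x. ennreal a * (\<Sum>t\<in>S. ennreal (g t x)) \<partial>N)"
    using nonneg \<open>0 \<le> a\<close> by (intro nn_integral_cong) (simp add: ennreal_mult sum_nonneg)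
  also have "\<dots> = ennreal a * (\<Sum>t\<in>S. \<integral>\<^sup>+x. ennreal (g t x) \<partial>N)"
    using meas by (simp add: nn_integral_cmult nn_integral_sum)
  also have "\<dots> \<le> ennreal a * (\<Sum>t\<in>S. ennreal (B t))"
    using bound by (intro mult_left_mono sum_mono) auto
  finally show ?thesis
    using assms by (simp add: ennreal_mult sum_nonneg)
qed

lemma (in prob_space) nn_integral_le_affine:
  assumes g: "g \<in> borel_measurable M" and g_nonneg: "\<And>x. 0 \<le> g x"
    and le: "\<And>x. f x \<le> a * g x + b" and int: "(\<integral>\<^sup>+x. ennreal (g x) \<partial>M) \<le> ennreal B"
    and "0 \<le> a" "0 \<le> b" "0 \<le> B"
  shows "(\<integral>\<^sup>+x. ennreal (f x) \<partial>M) \<le> ennreal (a * B + b)"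
proof -
  have "ennreal (f x) \<le> ennreal a * ennreal (g x) + ennreal b" for x
    using ennreal_leI[OF le[of x]] assms(5,6) g_nonneg[of x] by (simp add: ennreal_mult)
  then have "(\<integral>\<^sup>+x. ennreal (f x) \<partial>M) \<le> (\<integral>\<^sup>+x. ennreal a * ennreal (g x) + ennreal b \<partial>M)"
    by (rule nn_integral_mono)
  also have "\<dots> = ennreal a * (\<integral>\<^sup>+x. ennreal (g x) \<partial>M) + ennreal b"
    using g by (simp add: nn_integral_add nn_integral_cmult emeasure_space_1)
  also have "\<dots> \<le> ennreal a * ennreal B + ennreal b"
    using int by (intro add_right_mono mult_left_mono) auto
  also have "\<dots> = ennreal (a * B + b)"
    using assms(5-7) by (simp add: ennreal_mult)
  finally show ?thesis .
qed

text \<open>The weight 6 is the choice that yields the constants 2 and 16 of the final bound.\<close>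
lemma norm_add_scaleR_power2_le:
  fixes a b :: "'a::real_normed_vector"
  assumes "0 \<le> u"
  shows "(norm (a + u *\<^sub>R b))\<^sup>2 \<le> (1 + u\<^sup>2 / 6) * (norm a)\<^sup>2 + (u\<^sup>2 + 6) * (norm b)\<^sup>2"
proof -
  have "norm (a + u *\<^sub>R b) \<le> norm a + u * norm b"
    using assms norm_triangle_ineq[of a "u *\<^sub>R b"] by simp
  then have "(norm (a + u *\<^sub>R b))\<^sup>2 \<le> (norm a + u * norm b)\<^sup>2"
    by (simp add: power_mono)
  also have "\<dots> \<le> (1 + u\<^sup>2 / 6) * (norm a)\<^sup>2 + (u\<^sup>2 + 6) * (norm b)\<^sup>2"
    using sum_power2_ge_zero[of "u * norm a / 6 - norm b" 0]
    by (simp add: power2_eq_square algebra_simps)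
  finally show ?thesis .
qed

lemma lipschitz_constant_nonneg:
  fixes g :: "'a::real_normed_vector \<Rightarrow> 'b::real_normed_vector"
  assumes "\<And>x y. norm (g x - g y) \<le> L * norm (x - y)" and "(z :: 'a) \<noteq> 0"
  shows "0 \<le> L"
proof -
  have "0 \<le> L * norm z" using assms(1)[of z 0] by (metis norm_ge_zero order_trans diff_zero)
  then show ?thesis using assms(2) by (simp add: zero_le_mult_iff)
qed

lemma infnorm_vsign_le: "infnorm (vsign v) \<le> 1"
  unfolding infnorm_cart vsign_def
  by (rule cSup_least) (auto simp: sgn_real_def)

lemma borel_measurable_vsign[measurable]: "vsign \<in> borel_measurable borel"
proof -
  have "(\<lambda>x. vsign x \<bullet> i) \<in> borel_measurable borel" if "i \<in> Basis" for i :: "real^'d"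
  proof -
    obtain k where k: "i = axis k 1" using \<open>i \<in> Basis\<close> by (auto simp: Basis_vec_def)
    have "(\<lambda>x::real^'d. sgn (x $ k)) \<in> borel_measurable borel"
      by measurable
    then show ?thesis unfolding k vsign_def by (simp add: inner_axis)
  qed
  then show ?thesis by (auto simp: borel_measurable_euclidean_space[of vsign])
qed

section \<open>Enumerating the samples round by round\<close>

text \<open>Samples are enumerated round by round, so the iterate of a round depends only on samples
  enumerated before those of that round.\<close>
definition row_major_enum :: "nat \<Rightarrow> nat \<Rightarrow> nat \<times> nat" where
  "row_major_enum n k = (k div n + 1, k mod n + 1)"

lemma row_major_enum_index: "m < n \<Longrightarrow> row_major_enum n (q * n + m) = (Suc q, Suc m)"
  by (simp add: row_major_enum_def)

lemma row_major_enum_surj: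
  assumes "1 \<le> r" "j \<in> {1..n}"
  obtains q m where "m < n" "r = Suc q" "row_major_enum n (q * n + m) = (r, j)"
proof (rule that[of "j - 1" "r - 1"])
  show "j - 1 < n" "r = Suc (r - 1)" using assms by auto
  have "row_major_enum n ((r - 1) * n + (j - 1)) = (Suc (r - 1), Suc (j - 1))"
    using \<open>j - 1 < n\<close> by (rule row_major_enum_index)
  then show "row_major_enum n ((r - 1) * n + (j - 1)) = (r, j)" using assms by simp
qed

lemma inj_row_major_enum: "inj (row_major_enum n)"
proof (rule injI)
  fix a b assume "row_major_enum n a = row_major_enum n b"
  then have "a div n = b div n" "a mod n = b mod n" by (auto simp: row_major_enum_def)
  then show "a = b" by (metis div_mult_mod_eq)
qed

lemma row_major_enum_image:
  assumes "1 \<le> n"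
  shows "row_major_enum n ` {..<T * n} = {1..T} \<times> {1..n}"
proof (intro equalityI subsetI)
  fix x assume "x \<in> row_major_enum n ` {..<T * n}"
  then obtain k where "k < T * n" "x = row_major_enum n k" by auto
  moreover have "k div n < T" using \<open>k < T * n\<close> by (simp add: less_mult_imp_div_less)
  ultimately show "x \<in> {1..T} \<times> {1..n}" using assms by (auto simp: row_major_enum_def Suc_le_eq)
next
  fix x assume "x \<in> {1..T} \<times> {1..n}"
  then obtain r j where "x = (r, j)" "1 \<le> r" "r \<le> T" "j \<in> {1..n}" by auto
  then obtain q m where "m < n" "r = Suc q" "row_major_enum n (q * n + m) = x"
    by (metis row_major_enum_surj)
  moreover have "q * n + m < T * n"
    using \<open>m < n\<close> \<open>r \<le> T\<close> \<open>r = Suc q\<close> mult_le_mono1[of r T n] by simp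
  ultimately show "x \<in> row_major_enum n ` {..<T * n}" by blast
qed

lemma row_major_enum_earlier_round:
  assumes "1 \<le> r" "r < fst (row_major_enum n k)" "j \<in> {1..n}"
  shows "\<exists>l\<le>k. row_major_enum n l = (r, j)"
proof -
  obtain q m where "m < n" "r = Suc q" "row_major_enum n (q * n + m) = (r, j)"
    using assms(1,3) by (rule row_major_enum_surj)
  moreover have "q * n + m \<le> k"
  proof -
    have "Suc q \<le> k div n" using assms(2) \<open>r = Suc q\<close> by (simp add: row_major_enum_def)
    then have "Suc q * n \<le> k" by (metis div_times_less_eq_dividend mult_le_mono1 order_trans)
    then show ?thesis using \<open>m < n\<close> by simp
  qed
  ultimately show ?thesis by blast
qed

lemma sum_row_major_enum:
  assumes "1 \<le> n"
  shows "(\<Sum>k<T * n. h (row_major_enum n k)) = (\<Sum>s\<in>{1..T}. \<Sum>j\<in>{1..n}. h (s, j))"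
proof -
  have "(\<Sum>k<T * n. h (row_major_enum n k)) = (\<Sum>x\<in>row_major_enum n ` {..<T * n}. h x)"
    using inj_row_major_enum by (simp add: sum.reindex inj_on_def)
  then show ?thesis by (simp add: row_major_enum_image[OF assms] sum.cartesian_product)
qed

section \<open>Arithmetic of the moving-average weights\<close>

lemma sum_atLeastAtMost_split_first:
  "1 \<le> T \<Longrightarrow> (\<Sum>t\<in>{1..T}. g t) = g 1 + (\<Sum>s\<in>{1..<T}. g (Suc s))"
proof (induction T rule: dec_induct)
  case (step T)
  then show ?case by (simp add: sum.atLeastLessThan_Suc add.assoc)
qed simp

lemma sum_atLeastAtMost_vanishing_tail:
  assumes "Suc s \<le> T" "\<And>r. Suc s < r \<Longrightarrow> F r = 0"
  shows "(\<Sum>r\<in>{1..T}. F r) = (\<Sum>r\<in>{1..s}. F r) + F (Suc s)"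
proof -
  have "(\<Sum>r\<in>{1..T}. F r) = (\<Sum>r\<in>{1..Suc s}. F r)"
    using assms by (intro sum.mono_neutral_right) auto
  then show ?thesis by simp
qed

lemma lion_noise_factor_le:
  fixes b1 b2 :: real
  assumes b1: "0 < b1" "b1 \<le> 1" and b2: "0 < b2" "b2 \<le> 1"
    and b12: "b2\<^sup>2 \<le> b1" "b1 \<le> sqrt b2"
  shows "(1 + (1 - b1)\<^sup>2 / 6) * ((1 - b1)\<^sup>2 * (b2 / (2 - b2)) + b1\<^sup>2) \<le> 2 * b2"
proof -
  define u where "u = 1 - b1"
  have u: "0 \<le> u" "u < 1" using b1 unfolding u_def by auto
  have "b1\<^sup>2 \<le> b2" using power_mono[OF b12(2), of 2] b1 b2 by simp
  have "(1 - u / 2)\<^sup>2 = 1 - u + u\<^sup>2 / 4" by (simp add: power2_diff power_divide)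
  then have "b2\<^sup>2 \<le> (1 - u / 2)\<^sup>2"
    using b12(1) zero_le_power2[of u] unfolding u_def by linarith
  then have "1 + u / 2 \<le> 2 - b2"
    using power2_le_imp_le[of b2 "1 - u / 2"] u by linarith
  then have "u\<^sup>2 / (2 - b2) \<le> u\<^sup>2 / (1 + u / 2)"
    using u by (intro divide_left_mono) auto
  also have "\<dots> = 2 * u\<^sup>2 / (2 + u)" using u by (simp add: field_simps)
  finally have "u\<^sup>2 / (2 - b2) \<le> 2 * u\<^sup>2 / (2 + u)" .
  then have "b2 * (u\<^sup>2 / (2 - b2)) \<le> b2 * (2 * u\<^sup>2 / (2 + u))"
    using b2 by (intro mult_left_mono) auto
  then have "u\<^sup>2 * (b2 / (2 - b2)) + b1\<^sup>2 \<le> b2 * (2 * u\<^sup>2 / (2 + u) + 1)"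
    using \<open>b1\<^sup>2 \<le> b2\<close> by (simp add: algebra_simps)
  moreover have factor: "(1 + u\<^sup>2 / 6) * (2 * u\<^sup>2 / (2 + u) + 1) \<le> 2"
  proof -
    have "u ^ 4 \<le> u\<^sup>2" "u ^ 3 \<le> u\<^sup>2"
      using u by (auto intro: power_decreasing)
    moreover have "u\<^sup>2 \<le> u" using u by (simp add: power2_eq_square mult_left_le_one_le)
    moreover have expand: "(6 + u\<^sup>2) * (2 * u\<^sup>2 + (2 + u)) = 2 * u ^ 4 + u ^ 3 + 14 * u\<^sup>2 + 6 * u + 12"
      by (simp add: algebra_simps power2_eq_square power3_eq_cube power4_eq_xxxx)
    ultimately have "(6 + u\<^sup>2) * (2 * u\<^sup>2 + (2 + u)) \<le> 12 * (2 + u)"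
      unfolding expand using u by simp
    then show ?thesis using u by (simp add: field_simps)
  qed
  ultimately have "(1 + u\<^sup>2 / 6) * (u\<^sup>2 * (b2 / (2 - b2)) + b1\<^sup>2)
      \<le> (1 + u\<^sup>2 / 6) * (b2 * (2 * u\<^sup>2 / (2 + u) + 1))"
    by (intro mult_left_mono) auto
  also have "\<dots> = b2 * ((1 + u\<^sup>2 / 6) * (2 * u\<^sup>2 / (2 + u) + 1))"
    by (simp add: algebra_simps)
  also have "\<dots> \<le> b2 * 2" using factor b2 by (intro mult_left_mono) auto
  finally show ?thesis unfolding u_def by simp
qed

lemma lion_transient_factor_le:
  fixes b1 b2 :: real
  assumes b1: "0 < b1" "b1 \<le> 1" and b2: "0 < b2" "b2 \<le> 1" and b12: "b2\<^sup>2 \<le> b1"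
  shows "1 + (1 + (1 - b1)\<^sup>2 / 6) * (1 - b1)\<^sup>2 / (b2 * (2 - b2)) \<le> 2 / b2"
proof -
  define u where "u = 1 - b1"
  have u: "0 \<le> u" "u \<le> 1" "u \<le> 1 - b2\<^sup>2" using b1 b12 unfolding u_def by auto
  have "u\<^sup>2 \<le> u" using u by (simp add: power2_eq_square mult_left_le_one_le)
  then have "(1 + u\<^sup>2 / 6) * u\<^sup>2 \<le> 7 / 6 * u"
    using u by (intro mult_mono) auto
  also have "\<dots> \<le> (2 - b2)\<^sup>2"
    using u sum_power2_ge_zero[of "b2 - 12 / 13" 0] by (simp add: power2_eq_square algebra_simps)
  finally have "(1 + u\<^sup>2 / 6) * u\<^sup>2 / (b2 * (2 - b2)) \<le> (2 - b2)\<^sup>2 / (b2 * (2 - b2))"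
    using b2 by (intro divide_right_mono) auto
  also have "\<dots> = 2 / b2 - 1" using b2 by (simp add: field_simps power2_eq_square)
  finally show ?thesis unfolding u_def by simp
qed

lemma geometric_sum_shifted_le:
  fixes q :: real
  assumes "0 \<le> q" "q < 1"
  shows "(\<Sum>s\<in>{1..<T}. q ^ (s - 1)) \<le> 1 / (1 - q)"
proof (cases T)
  case (Suc T')
  have "(\<Sum>s\<in>{1..<T}. q ^ (s - 1)) = (\<Sum>i<T'. q ^ i)"
    using sum.shift_bounds_Suc_ivl[of "\<lambda>s. q ^ (s - 1)" 0 T'] by (simp add: Suc lessThan_atLeast0)
  also have "(1 - q) * \<dots> \<le> 1"
    using assms by (simp flip: one_diff_power_eq)
  finally show ?thesis using assms by (simp add: field_simps mult.commute)
qed (use assms in simp)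

lemma lion_round_error_le:
  fixes b1 b2 S Dl A p :: real
  assumes b1: "0 < b1" "b1 \<le> 1" and b2: "0 < b2" "b2 \<le> 1"
    and b12: "b2\<^sup>2 \<le> b1" "b1 \<le> sqrt b2"
    and S: "0 \<le> S" and Dl: "0 \<le> Dl" and A: "A \<le> p + b2 / (2 - b2)"
  shows "(1 + (1 - b1)\<^sup>2 / 6) * ((1 - b1)\<^sup>2 * A + b1\<^sup>2) * S + ((1 - b1)\<^sup>2 + 6) * (9 / 4 * Dl)
    \<le> (1 + (1 - b1)\<^sup>2 / 6) * (1 - b1)\<^sup>2 * S * p + (2 * b2 * S + 16 * Dl)"
proof -
  define c where "c = 1 + (1 - b1)\<^sup>2 / 6"
  have "c * ((1 - b1)\<^sup>2 * A + b1\<^sup>2) * S \<le> c * ((1 - b1)\<^sup>2 * (p + b2 / (2 - b2)) + b1\<^sup>2) * S"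
    using A S unfolding c_def by (intro mult_right_mono mult_left_mono add_right_mono) auto
  also have "\<dots> = c * (1 - b1)\<^sup>2 * S * p + c * ((1 - b1)\<^sup>2 * (b2 / (2 - b2)) + b1\<^sup>2) * S"
    by (simp add: algebra_simps)
  also have "\<dots> \<le> c * (1 - b1)\<^sup>2 * S * p + 2 * b2 * S"
    using lion_noise_factor_le[OF b1 b2 b12] S unfolding c_def
    by (intro add_left_mono mult_right_mono) auto
  moreover have "((1 - b1)\<^sup>2 + 6) * (9 / 4 * Dl) \<le> 7 * (9 / 4 * Dl)"
    using b1 Dl by (intro mult_right_mono) (auto simp: abs_square_le_1)
  ultimately show ?thesis unfolding c_def using Dl by linarith
qed

text \<open>\<open>S\<close>, \<open>Dl\<close> and \<open>A s\<close> stand for \<open>sigma\<^sup>2 / n\<close>, \<open>eta\<^sup>2 L\<^sup>2 d / b2\<^sup>2\<close> and the sum of the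
  squared moving-average weights after \<open>s\<close> steps.\<close>
lemma lion_error_sum_le:
  fixes b1 b2 S Dl :: real and A :: "nat \<Rightarrow> real"
  assumes b1: "0 < b1" "b1 \<le> 1" and b2: "0 < b2" "b2 \<le> 1"
    and b12: "b2\<^sup>2 \<le> b1" "b1 \<le> sqrt b2"
    and T: "1 \<le> T" and S: "0 \<le> S" and Dl: "0 \<le> Dl"
    and A: "\<And>s. 1 \<le> s \<Longrightarrow> A s \<le> ((1 - b2)\<^sup>2) ^ (s - 1) + b2 / (2 - b2)"
  shows "S + (\<Sum>s\<in>{1..<T}. (1 + (1 - b1)\<^sup>2 / 6) * ((1 - b1)\<^sup>2 * A s + b1\<^sup>2) * S
                             + ((1 - b1)\<^sup>2 + 6) * (9 / 4 * Dl))
         \<le> real T * (2 * S / (b2 * real T) + 16 * Dl + 2 * b2 * S)"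
proof -
  define u where "u = 1 - b1"
  define c where "c = 1 + u\<^sup>2 / 6"
  define q where "q = (1 - b2)\<^sup>2"
  have c: "0 \<le> c" unfolding c_def by simp
  have q: "0 \<le> q" "q < 1" "1 - q = b2 * (2 - b2)"
    using b2 unfolding q_def by (auto simp: abs_square_less_1) (simp add: power2_eq_square algebra_simps)
  have "(\<Sum>s\<in>{1..<T}. c * (u\<^sup>2 * A s + b1\<^sup>2) * S + (u\<^sup>2 + 6) * (9 / 4 * Dl))
      \<le> (\<Sum>s\<in>{1..<T}. c * u\<^sup>2 * S * q ^ (s - 1) + (2 * b2 * S + 16 * Dl))"
    using lion_round_error_le[OF b1 b2 b12 S Dl A] unfolding c_def u_def q_def
    by (intro sum_mono) auto
  also have "\<dots> = c * u\<^sup>2 * S * (\<Sum>s\<in>{1..<T}. q ^ (s - 1)) + real (T - 1) * (2 * b2 * S + 16 * Dl)"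
    by (simp add: sum.distrib sum_distrib_left)
  also have "\<dots> \<le> c * u\<^sup>2 * S / (b2 * (2 - b2)) + real T * (2 * b2 * S + 16 * Dl)"
  proof (rule add_mono)
    have "c * u\<^sup>2 * S * (\<Sum>s\<in>{1..<T}. q ^ (s - 1)) \<le> c * u\<^sup>2 * S * (1 / (1 - q))"
      using c S geometric_sum_shifted_le[OF q(1,2), of T] by (intro mult_left_mono) auto
    then show "c * u\<^sup>2 * S * (\<Sum>s\<in>{1..<T}. q ^ (s - 1)) \<le> c * u\<^sup>2 * S / (b2 * (2 - b2))"
      by (simp add: q)
    show "real (T - 1) * (2 * b2 * S + 16 * Dl) \<le> real T * (2 * b2 * S + 16 * Dl)"
      using b2 S Dl by (intro mult_right_mono) auto
  qed
  also have "c * u\<^sup>2 * S / (b2 * (2 - b2)) \<le> (2 / b2 - 1) * S"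
  proof -
    have "c * u\<^sup>2 / (b2 * (2 - b2)) \<le> 2 / b2 - 1"
      using lion_transient_factor_le[OF b1 b2 b12(1)] unfolding c_def u_def by simp
    then have "c * u\<^sup>2 / (b2 * (2 - b2)) * S \<le> (2 / b2 - 1) * S" using S by (rule mult_right_mono)
    then show ?thesis by simp
  qed
  finally have "(\<Sum>s\<in>{1..<T}. c * (u\<^sup>2 * A s + b1\<^sup>2) * S + (u\<^sup>2 + 6) * (9 / 4 * Dl))
      \<le> (2 / b2 - 1) * S + real T * (2 * b2 * S + 16 * Dl)" by simp
  moreover have "S + ((2 / b2 - 1) * S + real T * (2 * b2 * S + 16 * Dl))
      = real T * (2 * S / (b2 * real T) + 16 * Dl + 2 * b2 * S)"
    using T b2 by (simp add: field_simps)
  ultimately show ?thesis unfolding c_def u_def by linarith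
qed

text \<open>Weights of the moving average \<open>m 1 = g 1\<close>, \<open>m (t + 1) = (1 - \<beta>) m t + \<beta> g (t + 1)\<close>;
  the first input is not scaled by \<open>\<beta>\<close>.\<close>
definition ema_weight :: "real \<Rightarrow> nat \<Rightarrow> nat \<Rightarrow> real" where
  "ema_weight \<beta> t s = (if s = 1 then (1 - \<beta>) ^ (t - 1) else \<beta> * (1 - \<beta>) ^ (t - s))"

lemma ema_weight_Suc: "1 \<le> t \<Longrightarrow> s \<in> {1..t} \<Longrightarrow> ema_weight \<beta> (Suc t) s = (1 - \<beta>) * ema_weight \<beta> t s"
  by (cases t) (auto simp: ema_weight_def Suc_diff_le)

lemma ema_weight_last: "1 \<le> t \<Longrightarrow> ema_weight \<beta> (Suc t) (Suc t) = \<beta>"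
  by (simp add: ema_weight_def)

lemma sum_ema_weight_power2_le:
  assumes "0 < \<beta>" "\<beta> \<le> 1" "1 \<le> t"
  shows "(\<Sum>s\<in>{1..t}. (ema_weight \<beta> t s)\<^sup>2) \<le> ((1 - \<beta>)\<^sup>2) ^ (t - 1) + \<beta> / (2 - \<beta>)"
  using \<open>1 \<le> t\<close>
proof (induction t rule: dec_induct)
  case base
  then show ?case using assms by (simp add: ema_weight_def)
next
  case (step t)
  have "(\<Sum>s\<in>{1..Suc t}. (ema_weight \<beta> (Suc t) s)\<^sup>2)
      = (1 - \<beta>)\<^sup>2 * (\<Sum>s\<in>{1..t}. (ema_weight \<beta> t s)\<^sup>2) + \<beta>\<^sup>2"
    using step(1) by (simp add: sum_distrib_left ema_weight_Suc ema_weight_last power_mult_distrib)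
  also have "\<dots> \<le> (1 - \<beta>)\<^sup>2 * (((1 - \<beta>)\<^sup>2) ^ (t - 1) + \<beta> / (2 - \<beta>)) + \<beta>\<^sup>2"
    using step(3) by (intro add_right_mono mult_left_mono) auto
  also have "\<dots> = ((1 - \<beta>)\<^sup>2) ^ (Suc t - 1) + \<beta> / (2 - \<beta>)"
    using step(1) assms by (cases t) (auto simp: field_simps power2_eq_square)
  finally show ?case .
qed

text \<open>Coefficient of the noise of round \<open>r\<close> in the error of \<open>v\<close> at round \<open>s + 1\<close>.\<close>
definition v_noise_weight :: "real \<Rightarrow> real \<Rightarrow> nat \<Rightarrow> nat \<Rightarrow> real" where
  "v_noise_weight b1 b2 s r =
     (if r \<le> s then (1 - b1) * ema_weight b2 s r else if r = Suc s then b1 else 0)"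

lemma sum_v_noise_weight_power2:
  assumes "Suc s \<le> T"
  shows "(\<Sum>r\<in>{1..T}. (v_noise_weight b1 b2 s r)\<^sup>2)
    = (1 - b1)\<^sup>2 * (\<Sum>r\<in>{1..s}. (ema_weight b2 s r)\<^sup>2) + b1\<^sup>2"
proof -
  have "(\<Sum>r\<in>{1..T}. (v_noise_weight b1 b2 s r)\<^sup>2)
      = (\<Sum>r\<in>{1..s}. (v_noise_weight b1 b2 s r)\<^sup>2) + (v_noise_weight b1 b2 s (Suc s))\<^sup>2"
    using assms by (intro sum_atLeastAtMost_vanishing_tail) (auto simp: v_noise_weight_def)
  also have "(\<Sum>r\<in>{1..s}. (v_noise_weight b1 b2 s r)\<^sup>2)
      = (1 - b1)\<^sup>2 * (\<Sum>r\<in>{1..s}. (ema_weight b2 s r)\<^sup>2)"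
    unfolding sum_distrib_left by (intro sum.cong) (auto simp: v_noise_weight_def power_mult_distrib)
  finally show ?thesis by (simp add: v_noise_weight_def)
qed

section \<open>Dis-Lion along a sample path\<close>

definition dlion_m where
  "dlion_m G xi n b1 b2 eta lam x1 t j = fst (snd (dlion_state G xi n b1 b2 eta lam x1 t)) j"

locale dlion =
  fixes G :: "nat \<Rightarrow> real^'d \<Rightarrow> 's \<Rightarrow> real^'d" and n :: nat and b1 b2 eta lam :: real
    and x1 :: "real^'d" and gradf :: "nat \<Rightarrow> real^'d \<Rightarrow> real^'d"
begin

abbreviation xt :: "(nat \<Rightarrow> nat \<Rightarrow> 's) \<Rightarrow> nat \<Rightarrow> real^'d" where
  "xt X t \<equiv> dlion_x G X n b1 b2 eta lam x1 t"

abbreviation mt :: "(nat \<Rightarrow> nat \<Rightarrow> 's) \<Rightarrow> nat \<Rightarrow> nat \<Rightarrow> real^'d" where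
  "mt X t j \<equiv> dlion_m G X n b1 b2 eta lam x1 t j"

abbreviation vt :: "(nat \<Rightarrow> nat \<Rightarrow> 's) \<Rightarrow> nat \<Rightarrow> nat \<Rightarrow> real^'d" where
  "vt X t j \<equiv> dlion_v G X n b1 b2 eta lam x1 t j"

lemma xt_1: "xt X (Suc 0) = x1"
  by (simp add: dlion_x_def)

lemma mt_1: "mt X (Suc 0) j = G j x1 (X (Suc 0) j)"
  by (simp add: dlion_m_def Let_def)

lemma vt_1: "vt X (Suc 0) j = G j x1 (X (Suc 0) j)"
  by (simp add: dlion_v_def Let_def)

lemma xt_Suc:
  "1 \<le> t \<Longrightarrow> xt X (Suc t) = xt X t - eta *\<^sub>R (vsign (\<Sum>j\<in>{1..n}. vt X t j) + lam *\<^sub>R xt X t)"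
  by (cases t) (auto simp: dlion_x_def dlion_v_def Let_def split: prod.split)

lemma mt_Suc:
  "1 \<le> t \<Longrightarrow> mt X (Suc t) j = (1 - b2) *\<^sub>R mt X t j + b2 *\<^sub>R G j (xt X (Suc t)) (X (Suc t) j)"
  by (simp add: dlion_m_def dlion_x_def Let_def split: prod.split)

lemma vt_Suc:
  "1 \<le> t \<Longrightarrow> vt X (Suc t) j = (1 - b1) *\<^sub>R mt X t j + b1 *\<^sub>R G j (xt X (Suc t)) (X (Suc t) j)"
  by (simp add: dlion_v_def dlion_m_def dlion_x_def Let_def split: prod.split)

lemma dlion_path_cong:
  assumes "\<And>r j. 1 \<le> r \<Longrightarrow> r \<le> t \<Longrightarrow> j \<in> {1..n} \<Longrightarrow> X r j = X' r j"
  shows "xt X (Suc t) = xt X' (Suc t) \<and>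
    (\<forall>j\<in>{1..n}. 1 \<le> t \<longrightarrow> mt X t j = mt X' t j \<and> vt X t j = vt X' t j)"
  using assms
proof (induction t)
  case 0
  then show ?case by (simp add: xt_1)
next
  case (Suc t)
  then have IH: "xt X (Suc t) = xt X' (Suc t)" "1 \<le> t \<Longrightarrow> j \<in> {1..n} \<Longrightarrow> mt X t j = mt X' t j" for j
    by auto
  have mv: "mt X (Suc t) j = mt X' (Suc t) j \<and> vt X (Suc t) j = vt X' (Suc t) j" if "j \<in> {1..n}" for j
    using Suc.prems IH that by (cases "t = 0") (simp_all add: mt_1 vt_1 mt_Suc vt_Suc)
  then have "xt X (Suc (Suc t)) = xt X' (Suc (Suc t))"
    using IH by (simp add: xt_Suc)
  with mv show ?case by simp
qed

lemma xt_cong: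
  "(\<And>r j. 1 \<le> r \<Longrightarrow> r < t \<Longrightarrow> j \<in> {1..n} \<Longrightarrow> X r j = X' r j) \<Longrightarrow> 1 \<le> t \<Longrightarrow> xt X t = xt X' t"
  using dlion_path_cong[of "t - 1" X X'] by (cases t) auto

lemma vt_cong:
  "(\<And>r j. 1 \<le> r \<Longrightarrow> r \<le> t \<Longrightarrow> j \<in> {1..n} \<Longrightarrow> X r j = X' r j) \<Longrightarrow> 1 \<le> t \<Longrightarrow> j \<in> {1..n} \<Longrightarrow>
    vt X t j = vt X' t j"
  using dlion_path_cong[of t X X'] by auto

definition grad_avg :: "(nat \<Rightarrow> nat \<Rightarrow> 's) \<Rightarrow> nat \<Rightarrow> real^'d" where
  "grad_avg X t = (1 / real n) *\<^sub>R (\<Sum>j\<in>{1..n}. gradf j (xt X t))"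

definition noise :: "(nat \<Rightarrow> nat \<Rightarrow> 's) \<Rightarrow> nat \<Rightarrow> real^'d" where
  "noise X t = (1 / real n) *\<^sub>R (\<Sum>j\<in>{1..n}. G j (xt X t) (X t j) - gradf j (xt X t))"

definition v_err :: "(nat \<Rightarrow> nat \<Rightarrow> 's) \<Rightarrow> nat \<Rightarrow> real^'d" where
  "v_err X t = (1 / real n) *\<^sub>R (\<Sum>j\<in>{1..n}. vt X t j) - grad_avg X t"

definition m_err :: "(nat \<Rightarrow> nat \<Rightarrow> 's) \<Rightarrow> nat \<Rightarrow> real^'d" where
  "m_err X t = (1 / real n) *\<^sub>R (\<Sum>j\<in>{1..n}. mt X t j) - grad_avg X t"

definition noise_ema :: "(nat \<Rightarrow> nat \<Rightarrow> 's) \<Rightarrow> nat \<Rightarrow> real^'d" where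
  "noise_ema X t = (\<Sum>s\<in>{1..t}. ema_weight b2 t s *\<^sub>R noise X s)"

definition m_bias :: "(nat \<Rightarrow> nat \<Rightarrow> 's) \<Rightarrow> nat \<Rightarrow> real^'d" where
  "m_bias X t = m_err X t - noise_ema X t"

lemma noise_eq: "noise X t = (1 / real n) *\<^sub>R (\<Sum>j\<in>{1..n}. G j (xt X t) (X t j)) - grad_avg X t"
  unfolding noise_def grad_avg_def by (simp add: sum_subtractf algebra_simps)

lemma v_err_1: "v_err X (Suc 0) = noise X (Suc 0)"
  unfolding v_err_def noise_eq by (simp add: vt_1 xt_1)

lemma m_err_Suc:
  assumes "1 \<le> t"
  shows "m_err X (Suc t)
    = (1 - b2) *\<^sub>R (m_err X t + grad_avg X t - grad_avg X (Suc t)) + b2 *\<^sub>R noise X (Suc t)"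
proof -
  have sum_mt: "(\<Sum>j\<in>{1..n}. mt X (Suc t) j) = (1 - b2) *\<^sub>R (\<Sum>j\<in>{1..n}. mt X t j)
      + b2 *\<^sub>R (\<Sum>j\<in>{1..n}. G j (xt X (Suc t)) (X (Suc t) j))"
    using assms by (simp add: mt_Suc sum.distrib scaleR_sum_right)
  show ?thesis unfolding m_err_def noise_eq sum_mt
    by (simp add: algebra_simps, simp flip: scaleR_add_left add_divide_distrib)
qed

lemma v_err_Suc:
  assumes "1 \<le> t"
  shows "v_err X (Suc t)
    = (1 - b1) *\<^sub>R (m_err X t + grad_avg X t - grad_avg X (Suc t)) + b1 *\<^sub>R noise X (Suc t)"
proof -
  have sum_vt: "(\<Sum>j\<in>{1..n}. vt X (Suc t) j) = (1 - b1) *\<^sub>R (\<Sum>j\<in>{1..n}. mt X t j)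
      + b1 *\<^sub>R (\<Sum>j\<in>{1..n}. G j (xt X (Suc t)) (X (Suc t) j))"
    using assms by (simp add: vt_Suc sum.distrib scaleR_sum_right)
  show ?thesis unfolding v_err_def m_err_def noise_eq sum_vt
    by (simp add: algebra_simps, simp flip: scaleR_add_left add_divide_distrib)
qed

lemma noise_ema_Suc:
  assumes "1 \<le> t"
  shows "noise_ema X (Suc t) = (1 - b2) *\<^sub>R noise_ema X t + b2 *\<^sub>R noise X (Suc t)"
proof -
  have "noise_ema X (Suc t) = (\<Sum>s\<in>{1..t}. ema_weight b2 (Suc t) s *\<^sub>R noise X s)
      + ema_weight b2 (Suc t) (Suc t) *\<^sub>R noise X (Suc t)"
    unfolding noise_ema_def by (simp add: sum.cl_ivl_Suc)
  also have "(\<Sum>s\<in>{1..t}. ema_weight b2 (Suc t) s *\<^sub>R noise X s) = (1 - b2) *\<^sub>R noise_ema X t"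
    unfolding noise_ema_def scaleR_sum_right using assms by (intro sum.cong) (auto simp: ema_weight_Suc)
  finally show ?thesis using assms by (simp add: ema_weight_last)
qed

lemma m_bias_1: "m_bias X (Suc 0) = 0"
  unfolding m_bias_def m_err_def noise_ema_def noise_eq by (simp add: ema_weight_def mt_1 xt_1)

text \<open>Subtracting the moving average of the noise leaves a recursion driven by the gradient drift alone.\<close>
lemma m_bias_Suc:
  "1 \<le> t \<Longrightarrow> m_bias X (Suc t) = (1 - b2) *\<^sub>R (m_bias X t + grad_avg X t - grad_avg X (Suc t))"
  unfolding m_bias_def by (simp add: m_err_Suc noise_ema_Suc algebra_simps)

lemma v_err_Suc_split:
  "1 \<le> t \<Longrightarrow> v_err X (Suc t) = ((1 - b1) *\<^sub>R noise_ema X t + b1 *\<^sub>R noise X (Suc t))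
     + (1 - b1) *\<^sub>R (m_bias X t + grad_avg X t - grad_avg X (Suc t))"
  by (simp add: v_err_Suc m_bias_def algebra_simps)

lemma v_noise_combination_eq:
  assumes "Suc s \<le> T"
  shows "(1 - b1) *\<^sub>R noise_ema X s + b1 *\<^sub>R noise X (Suc s)
    = (\<Sum>r\<in>{1..T}. v_noise_weight b1 b2 s r *\<^sub>R noise X r)"
proof -
  have "(\<Sum>r\<in>{1..T}. v_noise_weight b1 b2 s r *\<^sub>R noise X r)
      = (\<Sum>r\<in>{1..s}. v_noise_weight b1 b2 s r *\<^sub>R noise X r) + v_noise_weight b1 b2 s (Suc s) *\<^sub>R noise X (Suc s)"
    using assms by (intro sum_atLeastAtMost_vanishing_tail) (auto simp: v_noise_weight_def)
  also have "(\<Sum>r\<in>{1..s}. v_noise_weight b1 b2 s r *\<^sub>R noise X r) = (1 - b1) *\<^sub>R noise_ema X s"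
    unfolding noise_ema_def scaleR_sum_right by (intro sum.cong) (auto simp: v_noise_weight_def)
  finally show ?thesis by (simp add: v_noise_weight_def)
qed

lemma v_err_cong:
  assumes "\<And>r j. 1 \<le> r \<Longrightarrow> r \<le> t \<Longrightarrow> j \<in> {1..n} \<Longrightarrow> X r j = X' r j" "1 \<le> t"
  shows "v_err X t = v_err X' t"
proof -
  have "xt X t = xt X' t" using assms by (intro xt_cong) auto
  moreover have "vt X t j = vt X' t j" if "j \<in> {1..n}" for j
    using assms that by (intro vt_cong) auto
  ultimately show ?thesis by (simp add: v_err_def grad_avg_def)
qed

end

section \<open>Drift of the iterates\<close>

locale dlion_drift = dlion G n b1 b2 eta lam x1 gradf
  for G :: "nat \<Rightarrow> real^'d \<Rightarrow> 's \<Rightarrow> real^'d" and n b1 b2 eta lam x1 gradf +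
  fixes L :: real and T :: nat and drift :: real
  assumes eta: "0 < eta" and lam: "0 \<le> lam" "lam \<le> 1 / (2 * eta * real T)"
    and x1: "infnorm x1 \<le> eta" and T: "1 \<le> T" and n: "1 \<le> n"
    and Lipschitz: "\<And>j x y. j \<in> {1..n} \<Longrightarrow> norm (gradf j x - gradf j y) \<le> L * norm (x - y)"
    and L: "0 \<le> L" and b2: "0 < b2" "b2 \<le> 1"
    and drift_def: "drift = L * eta * (3 / 2) * sqrt (real CARD('d))"
      \<comment> \<open>a parameter rather than a definition: its value depends on the type \<open>'d\<close> alone\<close>
begin

lemma drift_nonneg: "0 \<le> drift"
  using L eta by (simp add: drift_def)

lemma infnorm_xt_le: "1 \<le> t \<Longrightarrow> infnorm (xt X t) \<le> real t * eta"
proof (induction t rule: dec_induct)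
  case base
  then show ?case using x1 by (simp add: xt_1)
next
  case (step t)
  have "eta * lam \<le> eta * (1 / (2 * eta * real T))"
    using lam eta by (intro mult_left_mono) auto
  also have "\<dots> \<le> 1 / 2" using eta T by (simp add: field_simps)
  finally have "eta * lam \<le> 1 / 2" .
  have "xt X (Suc t) = (1 - eta * lam) *\<^sub>R xt X t - eta *\<^sub>R vsign (\<Sum>j\<in>{1..n}. vt X t j)"
    using step(1) by (simp add: xt_Suc algebra_simps)
  then have "infnorm (xt X (Suc t))
      \<le> infnorm ((1 - eta * lam) *\<^sub>R xt X t) + infnorm (eta *\<^sub>R vsign (\<Sum>j\<in>{1..n}. vt X t j))"
    by (metis infnorm_triangle infnorm_neg diff_conv_add_uminus)
  also have "\<dots> \<le> (1 - eta * lam) * (real t * eta) + eta"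
    using \<open>eta * lam \<le> 1 / 2\<close> eta step(3) infnorm_vsign_le
    by (auto simp: infnorm_mul intro!: add_mono mult_left_mono)
  also have "\<dots> \<le> real (Suc t) * eta" using eta lam by (simp add: algebra_simps)
  finally show ?case .
qed

text \<open>A sign step moves each coordinate by at most \<open>eta\<close>, and the weight decay by at most
  \<open>eta * lam * t * eta \<le> eta / 2\<close> as long as \<open>t \<le> T\<close>.\<close>
lemma norm_xt_step_le:
  assumes "1 \<le> t" "t < T"
  shows "norm (xt X (Suc t) - xt X t) \<le> eta * (3 / 2) * sqrt (real CARD('d))"
proof -
  define v where "v = vsign (\<Sum>j\<in>{1..n}. vt X t j)"
  have "infnorm (lam *\<^sub>R xt X t) \<le> lam * (real t * eta)"
    using infnorm_xt_le[OF assms(1)] lam by (simp add: infnorm_mul mult_left_mono)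
  also have "\<dots> \<le> (1 / (2 * eta * real T)) * (real T * eta)"
    using lam eta assms by (intro mult_mono) auto
  also have "\<dots> = 1 / 2" using eta T by (simp add: field_simps)
  finally have infnorm_le: "infnorm (v + lam *\<^sub>R xt X t) \<le> 3 / 2"
    using infnorm_triangle[of v "lam *\<^sub>R xt X t"] infnorm_vsign_le[of "\<Sum>j\<in>{1..n}. vt X t j"]
    unfolding v_def by linarith
  have "norm (v + lam *\<^sub>R xt X t) \<le> sqrt (real DIM(real^'d)) * infnorm (v + lam *\<^sub>R xt X t)"
    by (rule norm_le_infnorm)
  also have "\<dots> \<le> sqrt (real CARD('d)) * (3 / 2)"
    using infnorm_le by (simp add: mult_left_mono)
  finally have "norm (v + lam *\<^sub>R xt X t) \<le> sqrt (real CARD('d)) * (3 / 2)" .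
  moreover have "norm (xt X (Suc t) - xt X t) = eta * norm (v + lam *\<^sub>R xt X t)"
    using assms eta by (simp add: xt_Suc v_def)
  ultimately show ?thesis using eta by (simp add: mult_left_mono mult.commute)
qed

lemma norm_grad_avg_step_le:
  assumes "1 \<le> t" "t < T"
  shows "norm (grad_avg X t - grad_avg X (Suc t)) \<le> drift"
proof -
  have "norm (grad_avg X t - grad_avg X (Suc t))
      = norm ((1 / real n) *\<^sub>R (\<Sum>j\<in>{1..n}. gradf j (xt X t) - gradf j (xt X (Suc t))))"
    unfolding grad_avg_def by (simp add: sum_subtractf algebra_simps)
  also have "\<dots> = (1 / real n) * norm (\<Sum>j\<in>{1..n}. gradf j (xt X t) - gradf j (xt X (Suc t)))"
    by simp
  also have "\<dots> \<le> (1 / real n) * (\<Sum>j\<in>{1..n}. L * norm (xt X (Suc t) - xt X t))"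
    using Lipschitz
    by (intro mult_left_mono order.trans[OF norm_sum sum_mono]) (auto simp: norm_minus_commute)
  also have "\<dots> = L * norm (xt X (Suc t) - xt X t)" using n by simp
  also have "\<dots> \<le> drift"
    using mult_left_mono[OF norm_xt_step_le[OF assms] L] by (simp add: drift_def algebra_simps)
  finally show ?thesis .
qed

lemma norm_m_bias_le: "1 \<le> t \<Longrightarrow> t \<le> T \<Longrightarrow> norm (m_bias X t) \<le> (1 - b2) / b2 * drift"
proof (induction t rule: dec_induct)
  case base
  then show ?case using b2 drift_nonneg by (simp add: m_bias_1)
next
  case (step t)
  have "norm (m_bias X (Suc t)) = (1 - b2) * norm (m_bias X t + (grad_avg X t - grad_avg X (Suc t)))"
    using b2 step(1) by (simp add: m_bias_Suc add_diff_eq)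
  also have "\<dots> \<le> (1 - b2) * ((1 - b2) / b2 * drift + drift)"
    using step b2 norm_grad_avg_step_le[of t X]
    by (intro mult_left_mono order.trans[OF norm_triangle_ineq] add_mono) auto
  also have "\<dots> = (1 - b2) / b2 * drift" using b2 by (simp add: field_simps)
  finally show ?case .
qed

lemma power2_norm_v_err_Suc_le:
  assumes "1 \<le> t" "t < T" "b1 \<le> 1"
  shows "(norm (v_err X (Suc t)))\<^sup>2
     \<le> (1 + (1 - b1)\<^sup>2 / 6) * (norm ((1 - b1) *\<^sub>R noise_ema X t + b1 *\<^sub>R noise X (Suc t)))\<^sup>2
       + ((1 - b1)\<^sup>2 + 6) * (drift / b2)\<^sup>2"
proof -
  have "norm (m_bias X t + grad_avg X t - grad_avg X (Suc t)) \<le> (1 - b2) / b2 * drift + drift"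
    using norm_m_bias_le[of t X] norm_grad_avg_step_le[of t X] assms
    by (simp add: add_diff_eq[symmetric] order.trans[OF norm_triangle_ineq] add_mono)
  also have "\<dots> = drift / b2" using b2 by (simp add: field_simps)
  finally have drift_term: "(norm (m_bias X t + grad_avg X t - grad_avg X (Suc t)))\<^sup>2 \<le> (drift / b2)\<^sup>2"
    by (simp add: power_mono)
  have "(norm (v_err X (Suc t)))\<^sup>2
     \<le> (1 + (1 - b1)\<^sup>2 / 6) * (norm ((1 - b1) *\<^sub>R noise_ema X t + b1 *\<^sub>R noise X (Suc t)))\<^sup>2
       + ((1 - b1)\<^sup>2 + 6) * (norm (m_bias X t + grad_avg X t - grad_avg X (Suc t)))\<^sup>2"
    unfolding v_err_Suc_split[OF assms(1)] using assms(3) by (intro norm_add_scaleR_power2_le) simp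
  also have "\<dots> \<le> (1 + (1 - b1)\<^sup>2 / 6) * (norm ((1 - b1) *\<^sub>R noise_ema X t + b1 *\<^sub>R noise X (Suc t)))\<^sup>2
       + ((1 - b1)\<^sup>2 + 6) * (drift / b2)\<^sup>2"
    using drift_term by (intro add_left_mono mult_left_mono) auto
  finally show ?thesis .
qed

end

section \<open>Expectation over the samples\<close>

locale dlion_noise = dlion_drift G n b1 b2 eta lam x1 gradf L T drift
  for G :: "nat \<Rightarrow> real^'d \<Rightarrow> 's \<Rightarrow> real^'d" and n b1 b2 eta lam x1 gradf L T drift +
  fixes D :: "nat \<Rightarrow> 's measure" and sigma :: real
  assumes D: "\<And>j. j \<in> {1..n} \<Longrightarrow> prob_space (D j)"
    and G_measurable: "\<And>j. j \<in> {1..n} \<Longrightarrow> (\<lambda>(x, s). G j x s) \<in> borel_measurable (borel \<Otimes>\<^sub>M D j)"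
    and G_integrable: "\<And>j x. j \<in> {1..n} \<Longrightarrow> integrable (D j) (G j x)"
    and G_unbiased: "\<And>j x. j \<in> {1..n} \<Longrightarrow> (\<integral>s. G j x s \<partial>D j) = gradf j x"
    and G_variance: "\<And>j x. j \<in> {1..n} \<Longrightarrow>
      (\<integral>\<^sup>+s. ennreal ((norm (G j x s - gradf j x))\<^sup>2) \<partial>D j) \<le> ennreal (sigma\<^sup>2)"
    and b1: "0 < b1" "b1 \<le> 1" and b12: "b2\<^sup>2 \<le> b1" "b1 \<le> sqrt b2"
begin

definition samples :: "(nat \<times> nat) set" where
  "samples = {1..T} \<times> {1..n}"

text \<open>\<open>D j\<close> is a probability space only for \<open>j \<in> {1..n}\<close>; the padding makes every factor of
  the product one.\<close>
definition sample_space :: "nat \<times> nat \<Rightarrow> 's measure" where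
  "sample_space = (\<lambda>(t, j). D (if j \<in> {1..n} then j else 1))"

abbreviation sample_measure :: "(nat \<times> nat \<Rightarrow> 's) measure" where
  "sample_measure \<equiv> PiM samples sample_space"

abbreviation path :: "(nat \<times> nat \<Rightarrow> 's) \<Rightarrow> nat \<Rightarrow> nat \<Rightarrow> 's" where
  "path w \<equiv> \<lambda>r j. w (r, j)"

lemma sample_space_eq: "j \<in> {1..n} \<Longrightarrow> sample_space (t, j) = D j"
  by (simp add: sample_space_def)

lemma prob_space_sample_space: "prob_space (sample_space i)"
  using D n by (cases i) (auto simp: sample_space_def)

lemma PiM_samples_eq: "PiM samples (\<lambda>(t, j). D j) = sample_measure"
  by (intro PiM_cong) (auto simp: samples_def sample_space_eq)

lemma measurable_G_sample:
  assumes h: "h \<in> borel_measurable sample_measure" and "(r, j) \<in> samples"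
  shows "(\<lambda>w. G j (h w) (w (r, j))) \<in> borel_measurable sample_measure"
proof -
  have j: "j \<in> {1..n}" using \<open>(r, j) \<in> samples\<close> by (simp add: samples_def)
  have "(\<lambda>w. w (r, j)) \<in> measurable sample_measure (D j)"
    using measurable_component_singleton[OF \<open>(r, j) \<in> samples\<close>, of sample_space]
    by (simp add: sample_space_eq[OF j])
  with h have "(\<lambda>w. (h w, w (r, j))) \<in> measurable sample_measure (borel \<Otimes>\<^sub>M D j)"
    by (rule measurable_Pair)
  from measurable_compose[OF this G_measurable[OF j]] show ?thesis by simp
qed

lemma measurable_dlion_path:
  "t \<le> T \<Longrightarrow> (\<lambda>w. xt (path w) (Suc t)) \<in> borel_measurable sample_measure \<and>
     (1 \<le> t \<longrightarrow> (\<forall>j\<in>{1..n}. (\<lambda>w. mt (path w) t j) \<in> borel_measurable sample_measure \<and>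
                               (\<lambda>w. vt (path w) t j) \<in> borel_measurable sample_measure))"
proof (induction t)
  case 0
  then show ?case by (simp add: xt_1)
next
  case (Suc t)
  then have IH: "(\<lambda>w. xt (path w) (Suc t)) \<in> borel_measurable sample_measure"
    "1 \<le> t \<Longrightarrow> j \<in> {1..n} \<Longrightarrow> (\<lambda>w. mt (path w) t j) \<in> borel_measurable sample_measure" for j
    by auto
  have mv: "(\<lambda>w. mt (path w) (Suc t) j) \<in> borel_measurable sample_measure \<and>
            (\<lambda>w. vt (path w) (Suc t) j) \<in> borel_measurable sample_measure" if j: "j \<in> {1..n}" for j
  proof -
    have "(Suc t, j) \<in> samples" using j Suc.prems by (simp add: samples_def)
    from measurable_G_sample[OF IH(1) this] measurable_G_sample[OF measurable_const this]
    show ?thesis using IH(2)[OF _ j] by (cases "t = 0") (simp_all add: mt_1 vt_1 mt_Suc vt_Suc)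
  qed
  have "(\<lambda>w. xt (path w) (Suc (Suc t))) = (\<lambda>w. xt (path w) (Suc t)
      - eta *\<^sub>R (vsign (\<Sum>j\<in>{1..n}. vt (path w) (Suc t) j) + lam *\<^sub>R xt (path w) (Suc t)))"
    by (simp add: xt_Suc)
  also have "\<dots> \<in> borel_measurable sample_measure"
    using IH(1) mv by (intro borel_measurable_diff borel_measurable_scaleR borel_measurable_add
        measurable_compose[OF _ borel_measurable_vsign] borel_measurable_sum measurable_const) auto
  finally show ?case using mv by simp
qed

lemma measurable_xt: "1 \<le> t \<Longrightarrow> t \<le> Suc T \<Longrightarrow> (\<lambda>w. xt (path w) t) \<in> borel_measurable sample_measure"
  using measurable_dlion_path[of "t - 1"] by simp

lemma measurable_vt:
  "1 \<le> t \<Longrightarrow> t \<le> T \<Longrightarrow> j \<in> {1..n} \<Longrightarrow> (\<lambda>w. vt (path w) t j) \<in> borel_measurable sample_measure"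
  using measurable_dlion_path[of t] by simp

lemma borel_measurable_gradf: "j \<in> {1..n} \<Longrightarrow> gradf j \<in> borel_measurable borel"
  using Lipschitz L
  by (intro borel_measurable_continuous_onI lipschitz_on_continuous_on) (auto simp: lipschitz_on_def dist_norm)

lemma measurable_noise:
  assumes "1 \<le> s" "s \<le> T"
  shows "(\<lambda>w. noise (path w) s) \<in> borel_measurable sample_measure"
  unfolding noise_def
proof (intro borel_measurable_scaleR measurable_const borel_measurable_sum borel_measurable_diff)
  fix j assume j: "j \<in> {1..n}"
  have x: "(\<lambda>w. xt (path w) s) \<in> borel_measurable sample_measure"
    using assms by (intro measurable_xt) auto
  show "(\<lambda>w. G j (xt (path w) s) (w (s, j))) \<in> borel_measurable sample_measure"
    using assms j by (intro measurable_G_sample[OF x]) (auto simp: samples_def)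
  show "(\<lambda>w. gradf j (xt (path w) s)) \<in> borel_measurable sample_measure"
    using measurable_compose[OF x borel_measurable_gradf[OF j]] .
qed simp

lemma measurable_v_err:
  assumes "1 \<le> t" "t \<le> T"
  shows "(\<lambda>w. v_err (path w) t) \<in> borel_measurable sample_measure"
  unfolding v_err_def grad_avg_def
  using assms measurable_vt measurable_compose[OF measurable_xt borel_measurable_gradf]
  by (intro borel_measurable_diff borel_measurable_scaleR measurable_const borel_measurable_sum) auto

lemma borel_measurable_mean_v_err:
  "(\<lambda>w. ennreal ((1 / real T) * (\<Sum>t\<in>{1..T}. (norm (v_err (path w) t))\<^sup>2))) \<in> borel_measurable sample_measure"
  using measurable_v_err by measurable

definition noise_term :: "nat \<Rightarrow> (nat \<times> nat \<Rightarrow> 's) \<Rightarrow> real^'d" where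
  "noise_term k w = (let (r, j) = row_major_enum n k
     in G j (xt (path w) r) (w (r, j)) - gradf j (xt (path w) r))"

lemma row_major_enum_samples: "row_major_enum n ` {..<T * n} = samples"
  using row_major_enum_image[OF n] by (simp add: samples_def)

lemma noise_term_cong:
  assumes "\<And>l. l \<le> k \<Longrightarrow> w (row_major_enum n l) = w' (row_major_enum n l)"
  shows "noise_term k w = noise_term k w'"
proof -
  obtain r j where rj: "row_major_enum n k = (r, j)" by fastforce
  then have "1 \<le> r" "j \<in> {1..n}" using n by (auto simp: row_major_enum_def Suc_le_eq)
  have "xt (path w) r = xt (path w') r"
    using \<open>1 \<le> r\<close> assms row_major_enum_earlier_round[of _ n k] rj by (intro xt_cong) fastforce
  then show ?thesis using assms[of k] rj by (simp add: noise_term_def)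
qed

lemma noise_term_update:
  assumes "row_major_enum n k = (r, j)"
  shows "noise_term k (w((r, j) := y)) = G j (xt (path w) r) y - gradf j (xt (path w) r)"
proof -
  have "1 \<le> r" using assms by (auto simp: row_major_enum_def)
  then have "xt (path (w((r, j) := y))) r = xt (path w) r"
    by (intro xt_cong) auto
  then show ?thesis using assms by (simp add: noise_term_def)
qed

lemma measurable_noise_term:
  assumes "k < m" "m \<le> T * n"
  shows "noise_term k \<in> borel_measurable (PiM (row_major_enum n ` {..<m}) sample_space)"
proof (rule measurable_PiM_subset_if_depends)
  obtain r j where rj: "row_major_enum n k = (r, j)" by fastforce
  have "row_major_enum n k \<in> samples"
    using assms by (auto simp flip: row_major_enum_samples)
  with rj have "(r, j) \<in> samples" by simp
  then have x: "(\<lambda>w. xt (path w) r) \<in> borel_measurable sample_measure"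
    by (intro measurable_xt) (auto simp: samples_def)
  show "noise_term k \<in> borel_measurable sample_measure"
    unfolding noise_term_def rj using \<open>(r, j) \<in> samples\<close>
    by (simp, intro borel_measurable_diff measurable_G_sample[OF x]
        measurable_compose[OF x borel_measurable_gradf]) (auto simp: samples_def)
  show "row_major_enum n ` {..<m} \<subseteq> samples"
    using assms by (auto simp flip: row_major_enum_samples)
  show "space (sample_space i) \<noteq> {}" for i
    using prob_space_sample_space prob_space.not_empty by blast
  show "noise_term k w = noise_term k w'"
    if "\<And>i. i \<in> row_major_enum n ` {..<m} \<Longrightarrow> w i = w' i" for w w'
    using that assms by (intro noise_term_cong) auto
qed

lemma sum_noise_term_eq:
  "(\<Sum>s\<in>{1..T}. c s *\<^sub>R noise (path w) s)
    = (\<Sum>k<T * n. (c (fst (row_major_enum n k)) / real n) *\<^sub>R noise_term k w)"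
proof -
  have "(\<Sum>s\<in>{1..T}. c s *\<^sub>R noise (path w) s) = (\<Sum>s\<in>{1..T}. \<Sum>j\<in>{1..n}.
      (c s / real n) *\<^sub>R (G j (xt (path w) s) (w (s, j)) - gradf j (xt (path w) s)))"
    by (simp add: noise_def scaleR_sum_right)
  also have "\<dots> = (\<Sum>k<T * n. (\<lambda>(s, j). (c s / real n) *\<^sub>R
      (G j (xt (path w) s) (w (s, j)) - gradf j (xt (path w) s))) (row_major_enum n k))"
    by (subst sum_row_major_enum[OF n]) simp
  also have "\<dots> = (\<Sum>k<T * n. (c (fst (row_major_enum n k)) / real n) *\<^sub>R noise_term k w)"
    by (intro sum.cong) (auto simp: noise_term_def split: prod.split)
  finally show ?thesis .
qed

lemma nn_integral_noise_combination_le: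
  "(\<integral>\<^sup>+w. ennreal ((norm (\<Sum>s\<in>{1..T}. c s *\<^sub>R noise (path w) s))\<^sup>2) \<partial>sample_measure)
     \<le> ennreal ((\<Sum>s\<in>{1..T}. (c s)\<^sup>2) * (sigma\<^sup>2 / real n))"
proof -
  define a where "a k = c (fst (row_major_enum n k)) / real n" for k
  have "(\<integral>\<^sup>+w. ennreal ((norm (\<Sum>l<T * n. a l *\<^sub>R noise_term l w))\<^sup>2)
          \<partial>PiM (row_major_enum n ` {..<T * n}) sample_space)
      \<le> ennreal ((\<Sum>l<T * n. (a l)\<^sup>2) * sigma\<^sup>2)"
  proof (rule nn_integral_PiM_norm_sum_centered_le[OF prob_space_sample_space inj_row_major_enum
        measurable_noise_term noise_term_cong])
    fix k w assume "k < T * n"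
    obtain r j where rj: "row_major_enum n k = (r, j)" by fastforce
    then have j: "j \<in> {1..n}" using n by (auto simp: row_major_enum_def Suc_le_eq)
    interpret Dj: prob_space "D j" using D[OF j] .
    show "integrable (sample_space (row_major_enum n k)) (\<lambda>y. noise_term k (w(row_major_enum n k := y)))"
      unfolding rj noise_term_update[OF rj] sample_space_eq[OF j] using G_integrable[OF j] by simp
    show "(\<integral>y. noise_term k (w(row_major_enum n k := y)) \<partial>sample_space (row_major_enum n k)) = 0"
      unfolding rj noise_term_update[OF rj] sample_space_eq[OF j]
      using G_integrable[OF j] G_unbiased[OF j] by (simp add: Dj.prob_space)
    show "(\<integral>\<^sup>+y. ennreal ((norm (noise_term k (w(row_major_enum n k := y))))\<^sup>2)
        \<partial>sample_space (row_major_enum n k)) \<le> ennreal (sigma\<^sup>2)"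
      unfolding rj noise_term_update[OF rj] sample_space_eq[OF j] by (rule G_variance[OF j])
  qed auto
  moreover note row_major_enum_samples
  moreover have "(\<Sum>l<T * n. (a l)\<^sup>2) * sigma\<^sup>2 = (\<Sum>s\<in>{1..T}. (c s)\<^sup>2) * (sigma\<^sup>2 / real n)"
  proof -
    have "(\<Sum>l<T * n. (a l)\<^sup>2) = (\<Sum>s\<in>{1..T}. \<Sum>j\<in>{1..n}. (c s / real n)\<^sup>2)"
      using sum_row_major_enum[OF n, where h = "\<lambda>(s, j). (c s / real n)\<^sup>2"]
      by (simp add: a_def split_def)
    also have "\<dots> = (\<Sum>s\<in>{1..T}. (c s)\<^sup>2 / real n)"
      using n by (simp add: power_divide power2_eq_square)
    finally show ?thesis by (simp add: sum_divide_distrib sum_distrib_right)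
  qed
  ultimately show ?thesis unfolding a_def sum_noise_term_eq by simp
qed

lemma nn_integral_v_err_1_le:
  "(\<integral>\<^sup>+w. ennreal ((norm (v_err (path w) (Suc 0)))\<^sup>2) \<partial>sample_measure) \<le> ennreal (sigma\<^sup>2 / real n)"
proof -
  define c :: "nat \<Rightarrow> real" where "c s = (if s = Suc 0 then 1 else 0)" for s
  have "(\<Sum>s\<in>{1..T}. c s *\<^sub>R noise (path w) s) = (\<Sum>s\<in>{1..T}. if s = Suc 0 then noise (path w) s else 0)" for w
    by (intro sum.cong) (auto simp: c_def)
  then have "(\<Sum>s\<in>{1..T}. c s *\<^sub>R noise (path w) s) = v_err (path w) (Suc 0)" for w
    using T by (simp add: v_err_1)
  moreover have "(\<Sum>s\<in>{1..T}. (c s)\<^sup>2) = (\<Sum>s\<in>{1..T}. if s = Suc 0 then 1 else 0)"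
    by (intro sum.cong) (auto simp: c_def)
  then have "(\<Sum>s\<in>{1..T}. (c s)\<^sup>2) = 1" using T by simp
  ultimately show ?thesis
    using nn_integral_noise_combination_le[of c] by simp
qed

lemma nn_integral_v_err_Suc_le:
  assumes "1 \<le> s" "s < T"
  shows "(\<integral>\<^sup>+w. ennreal ((norm (v_err (path w) (Suc s)))\<^sup>2) \<partial>sample_measure)
    \<le> ennreal ((1 + (1 - b1)\<^sup>2 / 6) * (((1 - b1)\<^sup>2 * (\<Sum>r\<in>{1..s}. (ema_weight b2 s r)\<^sup>2) + b1\<^sup>2)
                 * (sigma\<^sup>2 / real n)) + ((1 - b1)\<^sup>2 + 6) * (drift / b2)\<^sup>2)"
proof -
  interpret prob_space sample_measure
    using prob_space_sample_space by (intro prob_space_PiM) auto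
  show ?thesis
  proof (rule nn_integral_le_affine[where
        g = "\<lambda>w. (norm (\<Sum>r\<in>{1..T}. v_noise_weight b1 b2 s r *\<^sub>R noise (path w) r))\<^sup>2"])
    show "(\<lambda>w. (norm (\<Sum>r\<in>{1..T}. v_noise_weight b1 b2 s r *\<^sub>R noise (path w) r))\<^sup>2)
        \<in> borel_measurable sample_measure"
      using measurable_noise by (intro borel_measurable_power borel_measurable_norm
          borel_measurable_sum borel_measurable_scaleR measurable_const) auto
    show "(norm (v_err (path w) (Suc s)))\<^sup>2 \<le> (1 + (1 - b1)\<^sup>2 / 6)
        * (norm (\<Sum>r\<in>{1..T}. v_noise_weight b1 b2 s r *\<^sub>R noise (path w) r))\<^sup>2
        + ((1 - b1)\<^sup>2 + 6) * (drift / b2)\<^sup>2" for w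
      using power2_norm_v_err_Suc_le[OF assms b1(2)] v_noise_combination_eq[of s T] assms by simp
    show "(\<integral>\<^sup>+w. ennreal ((norm (\<Sum>r\<in>{1..T}. v_noise_weight b1 b2 s r *\<^sub>R noise (path w) r))\<^sup>2)
        \<partial>sample_measure)
        \<le> ennreal (((1 - b1)\<^sup>2 * (\<Sum>r\<in>{1..s}. (ema_weight b2 s r)\<^sup>2) + b1\<^sup>2) * (sigma\<^sup>2 / real n))"
      using nn_integral_noise_combination_le[of "v_noise_weight b1 b2 s"] sum_v_noise_weight_power2[of s T]
        assms by simp
  qed (auto simp: sum_nonneg)
qed

lemma nn_integral_mean_v_err_le:
  "(\<integral>\<^sup>+w. ennreal ((1 / real T) * (\<Sum>t\<in>{1..T}. (norm (v_err (path w) t))\<^sup>2)) \<partial>sample_measure)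
     \<le> ennreal (2 * sigma\<^sup>2 / (b2 * real n * real T) + 16 * eta\<^sup>2 * L\<^sup>2 * real CARD('d) / b2\<^sup>2
                + 2 * b2 * sigma\<^sup>2 / real n)"
proof -
  define S where "S = sigma\<^sup>2 / real n"
  define Dl where "Dl = eta\<^sup>2 * L\<^sup>2 * real CARD('d) / b2\<^sup>2"
  define B where "B t = (if t = 1 then S else
      (1 + (1 - b1)\<^sup>2 / 6) * (((1 - b1)\<^sup>2 * (\<Sum>r\<in>{1..t - 1}. (ema_weight b2 (t - 1) r)\<^sup>2) + b1\<^sup>2) * S)
      + ((1 - b1)\<^sup>2 + 6) * (9 / 4 * Dl))" for t
  have "S \<ge> 0" "Dl \<ge> 0" unfolding S_def Dl_def by simp_all
  have drift_sq: "(drift / b2)\<^sup>2 = 9 / 4 * Dl"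
    unfolding drift_def Dl_def using eta by (simp add: power_divide power_mult_distrib)
  have v_err_le_B: "(\<integral>\<^sup>+w. ennreal ((norm (v_err (path w) t))\<^sup>2) \<partial>sample_measure) \<le> ennreal (B t)"
    if t: "t \<in> {1..T}" for t
  proof (cases "t = 1")
    case True
    then show ?thesis using nn_integral_v_err_1_le by (simp add: B_def S_def)
  next
    case False
    then obtain s where "t = Suc s" "1 \<le> s" "s < T" using t by (cases t) auto
    then show ?thesis
      using nn_integral_v_err_Suc_le[of s, unfolded drift_sq] by (simp add: B_def S_def)
  qed
  have "(\<integral>\<^sup>+w. ennreal ((1 / real T) * (\<Sum>t\<in>{1..T}. (norm (v_err (path w) t))\<^sup>2)) \<partial>sample_measure)
      \<le> ennreal ((1 / real T) * (\<Sum>t\<in>{1..T}. B t))"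
    using measurable_v_err v_err_le_B \<open>S \<ge> 0\<close> \<open>Dl \<ge> 0\<close>
    by (intro nn_integral_cmult_sum_le) (auto simp: B_def sum_nonneg)
  also have "(\<Sum>t\<in>{1..T}. B t) \<le> real T * (2 * S / (b2 * real T) + 16 * Dl + 2 * b2 * S)"
    unfolding sum_atLeastAtMost_split_first[OF T, of B]
    using lion_error_sum_le[OF b1 b2 b12 T \<open>S \<ge> 0\<close> \<open>Dl \<ge> 0\<close> sum_ema_weight_power2_le[OF b2]]
    by (simp add: B_def mult.assoc)
  then have "(1 / real T) * (\<Sum>t\<in>{1..T}. B t) \<le> 2 * S / (b2 * real T) + 16 * Dl + 2 * b2 * S"
    using T by (simp add: field_simps)
  finally show ?thesis unfolding S_def Dl_def by (simp add: ennreal_leI field_simps)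
qed

lemma nn_integral_mean_v_err_eq_PiM:
  assumes M: "prob_space M"
    and xi_meas: "\<And>t j. t \<ge> 1 \<Longrightarrow> j \<in> {1..n} \<Longrightarrow> xi t j \<in> measurable M (D j)"
    and xi_distr: "\<And>t j. t \<ge> 1 \<Longrightarrow> j \<in> {1..n} \<Longrightarrow> distr M (D j) (xi t j) = D j"
    and xi_indep: "prob_space.indep_vars M (\<lambda>(t, j). D j) (\<lambda>(t, j). xi t j)
                     {(t, j). t \<ge> 1 \<and> j \<in> {1..n}}"
  shows "(\<integral>\<^sup>+\<omega>. ennreal ((1 / real T) * (\<Sum>t\<in>{1..T}. (norm (v_err (\<lambda>t j. xi t j \<omega>) t))\<^sup>2)) \<partial>M)
    = (\<integral>\<^sup>+w. ennreal ((1 / real T) * (\<Sum>t\<in>{1..T}. (norm (v_err (path w) t))\<^sup>2)) \<partial>sample_measure)"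
proof -
  interpret M: prob_space M by (rule M)
  define F where "F w = ennreal ((1 / real T) * (\<Sum>t\<in>{1..T}. (norm (v_err (path w) t))\<^sup>2))" for w
  have "v_err (\<lambda>t j. xi t j \<omega>) t = v_err (path (\<lambda>i\<in>samples. (\<lambda>(t, j). xi t j) i \<omega>)) t"
    if "t \<in> {1..T}" for t \<omega>
    using that by (intro v_err_cong) (auto simp: samples_def)
  then have "(\<integral>\<^sup>+\<omega>. ennreal ((1 / real T) * (\<Sum>t\<in>{1..T}. (norm (v_err (\<lambda>t j. xi t j \<omega>) t))\<^sup>2)) \<partial>M)
      = (\<integral>\<^sup>+\<omega>. F (\<lambda>i\<in>samples. (\<lambda>(t, j). xi t j) i \<omega>) \<partial>M)"
    unfolding F_def by (intro nn_integral_cong) simp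
  also have "\<dots> = (\<integral>\<^sup>+w. F w \<partial>PiM samples (\<lambda>(t, j). D j))"
  proof (rule M.nn_integral_indep_vars_PiM)
    show "M.indep_vars (\<lambda>(t, j). D j) (\<lambda>(t, j). xi t j) samples"
      using xi_indep by (rule M.indep_vars_subset) (auto simp: samples_def)
    show "samples \<noteq> {}" using n T by (auto simp: samples_def)
    show "F \<in> borel_measurable (PiM samples (\<lambda>(t, j). D j))"
      unfolding F_def PiM_samples_eq by (rule borel_measurable_mean_v_err)
  qed (use xi_meas xi_distr in \<open>auto simp: samples_def\<close>)
  finally show ?thesis unfolding F_def PiM_samples_eq .
qed

end

theorem mainTheorem7:
  fixes M :: "'w measure"
    and D :: "nat \<Rightarrow> 's measure"
    and xi :: "nat \<Rightarrow> nat \<Rightarrow> 'w \<Rightarrow> 's"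
    and f :: "nat \<Rightarrow> real^'d \<Rightarrow> real"
    and gradf :: "nat \<Rightarrow> real^'d \<Rightarrow> real^'d"
    and G :: "nat \<Rightarrow> real^'d \<Rightarrow> 's \<Rightarrow> real^'d"
    and n T :: nat
    and L sigma b1 b2 eta lam :: real
    and x1 :: "real^'d"
  assumes M: "prob_space M"
    and D: "\<And>j. j \<in> {1..n} \<Longrightarrow> prob_space (D j)"
    and n: "n \<ge> 1" and T: "T \<ge> 1"
    and xi_meas: "\<And>t j. t \<ge> 1 \<Longrightarrow> j \<in> {1..n} \<Longrightarrow> xi t j \<in> measurable M (D j)"
    and xi_distr: "\<And>t j. t \<ge> 1 \<Longrightarrow> j \<in> {1..n} \<Longrightarrow> distr M (D j) (xi t j) = D j"
    and xi_indep: "prob_space.indep_vars M (\<lambda>(t, j). D j) (\<lambda>(t, j). xi t j)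
                     {(t, j). t \<ge> 1 \<and> j \<in> {1..n}}"
    and grad: "\<And>j x. j \<in> {1..n} \<Longrightarrow> GDERIV (f j) x :> gradf j x"
    and D1: "\<And>j x y. j \<in> {1..n} \<Longrightarrow> norm (gradf j x - gradf j y) \<le> L * norm (x - y)"
    and G_meas: "\<And>j. j \<in> {1..n} \<Longrightarrow>
                   (\<lambda>(x, s). G j x s) \<in> borel_measurable (borel \<Otimes>\<^sub>M D j)"
    and D3_int: "\<And>j x. j \<in> {1..n} \<Longrightarrow> integrable (D j) (G j x)"
    and D3_unbiased: "\<And>j x. j \<in> {1..n} \<Longrightarrow> (\<integral>s. G j x s \<partial>D j) = gradf j x"
    and D3_var: "\<And>j x. j \<in> {1..n} \<Longrightarrow>
                   (\<integral>\<^sup>+s. ennreal ((norm (G j x s - gradf j x))\<^sup>2) \<partial>D j) \<le> ennreal (sigma\<^sup>2)"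
    and b1: "0 < b1" "b1 \<le> 1" and b2: "0 < b2" "b2 \<le> 1"
    and b12: "b2\<^sup>2 \<le> b1" "b1 \<le> sqrt b2"
    and eta: "eta > 0"
    and lam: "0 \<le> lam" "lam \<le> 1 / (2 * eta * real T)"
    and x1: "infnorm x1 \<le> eta"
  shows "(\<integral>\<^sup>+\<omega>. ennreal ((1 / real T) * (\<Sum>t\<in>{1..T}.
            (norm ((1 / real n) *\<^sub>R (\<Sum>j\<in>{1..n}.
                      dlion_v G (\<lambda>t j. xi t j \<omega>) n b1 b2 eta lam x1 t j)
                   - (1 / real n) *\<^sub>R (\<Sum>j\<in>{1..n}.
                      gradf j (dlion_x G (\<lambda>t j. xi t j \<omega>) n b1 b2 eta lam x1 t))))\<^sup>2)) \<partial>M)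
         \<le> ennreal (2 * sigma\<^sup>2 / (b2 * real n * real T)
                    + 16 * eta\<^sup>2 * L\<^sup>2 * real CARD('d) / b2\<^sup>2
                    + 2 * b2 * sigma\<^sup>2 / real n)"
proof -
  have "0 \<le> L"
    using D1[of 1] n by (intro lipschitz_constant_nonneg[of "gradf 1" L "axis undefined 1"]) auto
  interpret dlion_noise G n b1 b2 eta lam x1 gradf L T "L * eta * (3 / 2) * sqrt (real CARD('d))" D sigma
    by (intro dlion_noise.intro dlion_drift.intro dlion_noise_axioms.intro; (fact assms \<open>0 \<le> L\<close> | rule refl))
  have "(\<integral>\<^sup>+\<omega>. ennreal ((1 / real T) * (\<Sum>t\<in>{1..T}. (norm (v_err (\<lambda>t j. xi t j \<omega>) t))\<^sup>2)) \<partial>M)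
      = (\<integral>\<^sup>+w. ennreal ((1 / real T) * (\<Sum>t\<in>{1..T}. (norm (v_err (path w) t))\<^sup>2)) \<partial>sample_measure)"
    by (rule nn_integral_mean_v_err_eq_PiM[OF M xi_meas xi_distr xi_indep])
  also have "\<dots> \<le> ennreal (2 * sigma\<^sup>2 / (b2 * real n * real T)
                 + 16 * eta\<^sup>2 * L\<^sup>2 * real CARD('d) / b2\<^sup>2 + 2 * b2 * sigma\<^sup>2 / real n)"
    by (rule nn_integral_mean_v_err_le)
  finally show ?thesis unfolding v_err_def grad_avg_def .
qed

end
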